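(* Let $k \geq 3$ and let $A$ be a finite abelian group with at least $k$ elements. Fix a distinct difference system $S_1,\ldots,S_l$ in $A$. Call a subset of $A$ a basis if it has $k$ elements and is not a translate of a subset of some $S_i$ (i.e. it is not of the form $\{s+a : s \in T\}$ for some $a \in A$ and some $T \subseteq S_i$). Then these bases define a simple rank $k$ $A$-invariant matroid structure on $A$.
   Context: For an abelian group $A$, subsets $S_1,\ldots,S_l \subseteq A$ form a distinct difference system if: (i) for any $i,j$ and any $x,y \in S_i$, $z,w \in S_j$ with $x \neq y$ and $z \neq w$, the equation $x-y=z-w$ implies $x=z$ and $y=w$; (ii) each $S_i$ contains $0$ and at least one other element; (iii) $S_i \cap S_j = \{0\}$ for $i \neq j$. $A$ acts on itself by translation, and a matroid on $A$ is $A$-invariant if translates of bases are bases. A matroid is simple if every circuit has at least three elements. *)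

theory Defs
  imports Main
begin

definition distinct_difference_system :: "nat \<Rightarrow> (nat \<Rightarrow> 'a::ab_group_add set) \<Rightarrow> bool" where
  "distinct_difference_system l S \<longleftrightarrow>
     (\<forall>i<l. \<forall>j<l. \<forall>x\<in>S i. \<forall>y\<in>S i. \<forall>z\<in>S j. \<forall>w\<in>S j.
         x \<noteq> y \<longrightarrow> z \<noteq> w \<longrightarrow> x - y = z - w \<longrightarrow> x = z \<and> y = w) \<and>
     (\<forall>i<l. 0 \<in> S i \<and> (\<exists>x\<in>S i. x \<noteq> 0)) \<and>
     (\<forall>i<l. \<forall>j<l. i \<noteq> j \<longrightarrow> S i \<inter> S j = {0})"

definition matroid_bases :: "'a set \<Rightarrow> 'a set set \<Rightarrow> bool" where
  "matroid_bases E \<B> \<longleftrightarrow> finite E \<and> \<B> \<noteq> {} \<and> (\<forall>B\<in>\<B>. B \<subseteq> E) \<and>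
     (\<forall>B1\<in>\<B>. \<forall>B2\<in>\<B>. \<forall>x\<in>B1 - B2. \<exists>y\<in>B2 - B1. insert y (B1 - {x}) \<in> \<B>)"

definition mat_indep :: "'a set set \<Rightarrow> 'a set \<Rightarrow> bool" where
  "mat_indep \<B> X \<longleftrightarrow> (\<exists>B\<in>\<B>. X \<subseteq> B)"

definition mat_circuit :: "'a set \<Rightarrow> 'a set set \<Rightarrow> 'a set \<Rightarrow> bool" where
  "mat_circuit E \<B> C \<longleftrightarrow> C \<subseteq> E \<and> \<not> mat_indep \<B> C \<and> (\<forall>D. D \<subset> C \<longrightarrow> mat_indep \<B> D)"

definition simple_matroid :: "'a set \<Rightarrow> 'a set set \<Rightarrow> bool" where
  "simple_matroid E \<B> \<longleftrightarrow> (\<forall>C. mat_circuit E \<B> C \<longrightarrow> 3 \<le> card C)"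

definition matroid_rank_is :: "'a set set \<Rightarrow> nat \<Rightarrow> bool" where
  "matroid_rank_is \<B> k \<longleftrightarrow> (\<forall>B\<in>\<B>. card B = k)"

definition translation_invariant :: "'a::ab_group_add set set \<Rightarrow> bool" where
  "translation_invariant \<B> \<longleftrightarrow> (\<forall>B\<in>\<B>. \<forall>a. (\<lambda>x. x + a) ` B \<in> \<B>)"

definition dds_bases :: "nat \<Rightarrow> nat \<Rightarrow> (nat \<Rightarrow> 'a::ab_group_add set) \<Rightarrow> 'a set set" where
  "dds_bases k l S = {X. card X = k \<and>
      \<not> (\<exists>i<l. \<exists>a. \<exists>T. T \<subseteq> S i \<and> X = (\<lambda>s. s + a) ` T)}"

end

theory Submission
  imports Defs
begin

text \<open>Since all differences within the blocks \<open>S i\<close> are distinct, two different translates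
  of blocks meet in at most one point. So if a set \<open>Z\<close> of at least two points lies in a block
  translate \<open>T\<close>, adding any point outside \<open>T\<close> yields a set lying in no block translate. As
  \<open>k \<ge> 3\<close>, every set with \<open>k - 1\<close> points has at least two, which gives both the basis exchange
  property and the extension of every set of fewer than \<open>k\<close> points to a basis; in particular
  every circuit has at least \<open>k \<ge> 3\<close> elements.\<close>

definition block_translate :: "(nat \<Rightarrow> 'a::ab_group_add set) \<Rightarrow> nat \<Rightarrow> 'a \<Rightarrow> 'a set" where
  "block_translate S i a = (\<lambda>s. s + a) ` S i"

definition in_block_translate :: "nat \<Rightarrow> (nat \<Rightarrow> 'a::ab_group_add set) \<Rightarrow> 'a set \<Rightarrow> bool" where
  "in_block_translate l S X \<longleftrightarrow> (\<exists>i<l. \<exists>a. X \<subseteq> block_translate S i a)"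

lemma distinct_difference_system_diff_eqD:
  assumes "distinct_difference_system l S" "i < l" "j < l"
    and "x \<in> S i" "y \<in> S i" "z \<in> S j" "w \<in> S j" "x \<noteq> y" "z \<noteq> w" "x - y = z - w"
  shows "x = z \<and> y = w"
  by (rule assms(1)[unfolded distinct_difference_system_def, THEN conjunct1, rule_format,
        OF assms(2-)])

lemma distinct_difference_system_nonzeroD:
  assumes "distinct_difference_system l S" "i < l"
  obtains x where "x \<in> S i" "x \<noteq> 0"
  using assms(1)[unfolded distinct_difference_system_def, THEN conjunct2, THEN conjunct1,
      rule_format, OF assms(2)]
  by blast

lemma distinct_difference_system_disjointD:
  assumes "distinct_difference_system l S" "i < l" "j < l" "i \<noteq> j"
  shows "S i \<inter> S j = {0}"
  by (rule assms(1)[unfolded distinct_difference_system_def, THEN conjunct2, THEN conjunct2,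
        rule_format, OF assms(2-)])

lemma dds_bases_iff:
  "X \<in> dds_bases k l S \<longleftrightarrow> card X = k \<and> \<not> in_block_translate l S X"
proof -
  have translate_of_subset_iff:
    "(\<exists>T. T \<subseteq> S i \<and> X = (\<lambda>s. s + a) ` T) \<longleftrightarrow> X \<subseteq> block_translate S i a" for i a
  proof
    assume "X \<subseteq> block_translate S i a"
    then have "(\<lambda>x. x - a) ` X \<subseteq> S i \<and> X = (\<lambda>s. s + a) ` (\<lambda>x. x - a) ` X"
      unfolding block_translate_def by (auto simp: image_image)
    then show "\<exists>T. T \<subseteq> S i \<and> X = (\<lambda>s. s + a) ` T" by blast
  qed (auto simp: block_translate_def)
  show ?thesis
    unfolding dds_bases_def in_block_translate_def mem_Collect_eq
    by (simp only: translate_of_subset_iff)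
qed

lemma in_block_translate_subset:
  "in_block_translate l S Y \<Longrightarrow> X \<subseteq> Y \<Longrightarrow> in_block_translate l S X"
  unfolding in_block_translate_def by blast

lemma in_block_translate_translate_iff:
  "in_block_translate l S ((\<lambda>x. x + c) ` X) \<longleftrightarrow> in_block_translate l S X"
proof -
  have shift: "(\<lambda>x. x + c) ` X \<subseteq> block_translate S i (a + c) \<longleftrightarrow> X \<subseteq> block_translate S i a"
    for i a
    unfolding block_translate_def by (auto simp: add.assoc[symmetric])
  show ?thesis
    unfolding in_block_translate_def
  proof
    assume "\<exists>i<l. \<exists>a. (\<lambda>x. x + c) ` X \<subseteq> block_translate S i a"
    then obtain i a where "i < l" "(\<lambda>x. x + c) ` X \<subseteq> block_translate S i ((a - c) + c)"
      by auto
    then show "\<exists>i<l. \<exists>a. X \<subseteq> block_translate S i a"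
      using shift by blast
  qed (use shift in blast)
qed

lemma block_translates_eq_if_two_common_points:
  assumes D: "distinct_difference_system l S" and "i < l" "j < l" "u \<noteq> v"
    and "u \<in> block_translate S i a" "v \<in> block_translate S i a"
    and "u \<in> block_translate S j b" "v \<in> block_translate S j b"
  shows "i = j \<and> a = b"
proof -
  obtain s t s' t' where st: "s \<in> S i" "t \<in> S i" "s' \<in> S j" "t' \<in> S j"
    and uv: "u = s + a" "v = t + a" "u = s' + b" "v = t' + b"
    using assms(5-8) unfolding block_translate_def by blast
  have "s \<noteq> t" "s' \<noteq> t'" using uv \<open>u \<noteq> v\<close> by auto
  moreover have "s - t = s' - t'"
  proof -
    have "u - v = s - t" using uv(1,2) by simp
    moreover have "u - v = s' - t'" using uv(3,4) by simp
    ultimately show ?thesis by simp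
  qed
  ultimately have eq: "s = s' \<and> t = t'"
    using distinct_difference_system_diff_eqD[OF D \<open>i < l\<close> \<open>j < l\<close> st] by blast
  then have "a = b" using uv by simp
  moreover have "i = j"
  proof (rule ccontr)
    assume "i \<noteq> j"
    then have "s = 0" "t = 0"
      using distinct_difference_system_disjointD[OF D \<open>i < l\<close> \<open>j < l\<close>] eq st by auto
    then show False using \<open>s \<noteq> t\<close> by simp
  qed
  ultimately show ?thesis by simp
qed

lemma distinct_difference_system_block_ne_UNIV:
  assumes D: "distinct_difference_system l S" and "i < l"
  shows "S i \<noteq> UNIV"
proof
  assume U: "S i = UNIV"
  obtain x where x: "x \<in> S i" "x \<noteq> 0"
    using distinct_difference_system_nonzeroD[OF D \<open>i < l\<close>] .
  have "x - 0 = (x + x) - x" by simp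
  moreover have "x + x \<in> S i" "0 \<in> S i" "x + x \<noteq> x" using U x by simp_all
  ultimately have "0 = x"
    using distinct_difference_system_diff_eqD[OF D \<open>i < l\<close> \<open>i < l\<close>] x by blast
  then show False using x by simp
qed

lemma not_in_block_translate_UNIV:
  assumes "distinct_difference_system l S"
  shows "\<not> in_block_translate l S UNIV"
proof
  assume "in_block_translate l S UNIV"
  then obtain i a where "i < l" and onto: "UNIV \<subseteq> (\<lambda>s. s + a) ` S i"
    unfolding in_block_translate_def block_translate_def by blast
  have "x \<in> S i" for x
    using onto[THEN subsetD, of "x + a"] by auto
  then show False using distinct_difference_system_block_ne_UNIV[OF assms \<open>i < l\<close>] by blast
qed

lemma not_in_block_translate_insert:
  assumes D: "distinct_difference_system l S" and "finite Z" "2 \<le> card Z"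
    and "i < l" "Z \<subseteq> block_translate S i a" "y \<notin> block_translate S i a"
  shows "\<not> in_block_translate l S (insert y Z)"
proof
  assume "in_block_translate l S (insert y Z)"
  then obtain j b where "j < l" and yZ: "insert y Z \<subseteq> block_translate S j b"
    unfolding in_block_translate_def by blast
  obtain u v where "u \<in> Z" "v \<in> Z" "u \<noteq> v"
    using card_le_Suc0_iff_eq[OF \<open>finite Z\<close>] \<open>2 \<le> card Z\<close> by auto
  then have "i = j \<and> a = b"
    using block_translates_eq_if_two_common_points[OF D \<open>i < l\<close> \<open>j < l\<close>] assms(5) yZ by blast
  then show False using yZ assms(6) by blast
qed

lemma ex_insert_not_in_block_translate:
  assumes D: "distinct_difference_system l S" and "finite Z" "2 \<le> card Z"
    and W: "\<not> in_block_translate l S W" "\<not> W \<subseteq> Z"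
  shows "\<exists>y\<in>W - Z. \<not> in_block_translate l S (insert y Z)"
proof (cases "in_block_translate l S Z")
  case True
  then obtain i a where ia: "i < l" "Z \<subseteq> block_translate S i a"
    unfolding in_block_translate_def by blast
  then obtain y where "y \<in> W" "y \<notin> block_translate S i a"
    using W(1) unfolding in_block_translate_def by blast
  then show ?thesis
    using not_in_block_translate_insert[OF D \<open>finite Z\<close> \<open>2 \<le> card Z\<close> ia] ia(2) by blast
next
  case False
  then show ?thesis
    using W(2) in_block_translate_subset[of l S "insert _ Z" Z] by blast
qed

lemma subset_dds_basis_if_card_less:
  fixes S :: "nat \<Rightarrow> 'a::{ab_group_add, finite} set"
  assumes D: "distinct_difference_system l S" and "k \<ge> 3"
    and "card (UNIV :: 'a set) \<ge> k" and "card Y < k"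
  shows "\<exists>B\<in>dds_bases k l S. Y \<subseteq> B"
proof -
  have "\<exists>Z. Y \<subseteq> Z \<and> Z \<subseteq> UNIV \<and> card Z = k - 1"
    by (rule exists_subset_between) (use assms(3,4) in auto)
  then obtain Z where "Y \<subseteq> Z" and Z: "card Z = k - 1" by blast
  have "2 \<le> card Z" using Z assms(2) by simp
  moreover have "\<not> UNIV \<subseteq> Z"
  proof
    assume "UNIV \<subseteq> Z"
    then have "card (UNIV :: 'a set) \<le> card Z" by (simp add: card_mono)
    then show False using Z assms(2,3) by simp
  qed
  ultimately have "\<exists>y\<in>UNIV - Z. \<not> in_block_translate l S (insert y Z)"
    by (rule ex_insert_not_in_block_translate[OF D finite _ not_in_block_translate_UNIV[OF D]])
  then obtain y where "y \<notin> Z" "\<not> in_block_translate l S (insert y Z)" by blast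
  moreover have "card (insert y Z) = k" using \<open>y \<notin> Z\<close> Z assms(2) by simp
  ultimately have "insert y Z \<in> dds_bases k l S" unfolding dds_bases_iff by blast
  then show ?thesis using \<open>Y \<subseteq> Z\<close> by blast
qed

lemma dds_bases_exchange:
  assumes D: "distinct_difference_system l S" and "k \<ge> 3"
    and B1: "B1 \<in> dds_bases k l S" and B2: "B2 \<in> dds_bases k l S" and x: "x \<in> B1 - B2"
  shows "\<exists>y\<in>B2 - B1. insert y (B1 - {x}) \<in> dds_bases k l S"
proof -
  have "card B1 = k" "card B2 = k" "\<not> in_block_translate l S B2"
    using B1 B2 unfolding dds_bases_iff by blast+
  then have "finite B1" "finite B2" using assms(2) by (auto intro: card_ge_0_finite)
  define Z where "Z = B1 - {x}"
  have "finite Z" "card Z = k - 1"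
    using \<open>finite B1\<close> \<open>card B1 = k\<close> x unfolding Z_def by auto
  have "\<not> B2 \<subseteq> Z"
  proof
    assume "B2 \<subseteq> Z"
    then have "card B2 \<le> card Z" using \<open>finite Z\<close> by (rule card_mono[rotated])
    then show False using \<open>card B2 = k\<close> \<open>card Z = k - 1\<close> assms(2) by simp
  qed
  moreover have "2 \<le> card Z" using \<open>card Z = k - 1\<close> assms(2) by simp
  ultimately have "\<exists>y\<in>B2 - Z. \<not> in_block_translate l S (insert y Z)"
    using ex_insert_not_in_block_translate[OF D \<open>finite Z\<close> _ \<open>\<not> in_block_translate l S B2\<close>]
    by blast
  then obtain y where y: "y \<in> B2 - Z" and "\<not> in_block_translate l S (insert y Z)" by blast
  moreover have "card (insert y Z) = k"
    using y \<open>finite Z\<close> \<open>card Z = k - 1\<close> assms(2) by simp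
  ultimately have "insert y Z \<in> dds_bases k l S" unfolding dds_bases_iff by blast
  moreover have "y \<in> B2 - B1" using x y unfolding Z_def by blast
  ultimately show ?thesis unfolding Z_def by blast
qed

theorem theorem3p26:
  fixes k l :: nat and S :: "nat \<Rightarrow> 'a::{ab_group_add, finite} set"
  assumes "k \<ge> 3"
    and "card (UNIV :: 'a set) \<ge> k"
    and "distinct_difference_system l S"
  shows "matroid_bases (UNIV :: 'a set) (dds_bases k l S)
       \<and> simple_matroid (UNIV :: 'a set) (dds_bases k l S)
       \<and> matroid_rank_is (dds_bases k l S) k
       \<and> translation_invariant (dds_bases k l S)"
proof (intro conjI)
  note extend = subset_dds_basis_if_card_less[OF assms(3,1,2)]
  show "matroid_bases UNIV (dds_bases k l S)"
    unfolding matroid_bases_def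
  proof (intro conjI ballI)
    show "dds_bases k l S \<noteq> {}" using extend[of "{}"] assms(1) by auto
  next
    fix B1 B2 x
    assume "B1 \<in> dds_bases k l S" "B2 \<in> dds_bases k l S" "x \<in> B1 - B2"
    then show "\<exists>y\<in>B2 - B1. insert y (B1 - {x}) \<in> dds_bases k l S"
      by (rule dds_bases_exchange[OF assms(3,1)])
  qed simp_all
  show "simple_matroid UNIV (dds_bases k l S)"
    unfolding simple_matroid_def
  proof (intro allI impI)
    fix C
    assume "mat_circuit UNIV (dds_bases k l S) C"
    then have "\<not> (\<exists>B\<in>dds_bases k l S. C \<subseteq> B)"
      unfolding mat_circuit_def mat_indep_def by blast
    then have "\<not> card C < k" using extend by blast
    then show "3 \<le> card C" using assms(1) by simp
  qed
  show "matroid_rank_is (dds_bases k l S) k"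
    unfolding matroid_rank_is_def by (simp add: dds_bases_iff)
  show "translation_invariant (dds_bases k l S)"
    unfolding translation_invariant_def
    by (simp add: dds_bases_iff in_block_translate_translate_iff card_image)
qed

end
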